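(* In the setting described in the context, suppose $(g\circ h^a)_\sharp\mu=\mu$ for some $a>0$, and that $\int F\,d\mu$ is finite and nonzero. Then the structure functions have power-law scaling $S_p(k_n)\propto k_n^{-\zeta_p}$ (i.e. $S_p(k_n)=c\,k_n^{-\zeta_p}$ with a constant $c\neq0$ independent of $n$) with exponent $$\zeta_p=(1-\log_2a)\,p.$$
   Context: Let $(\mathcal{X},\Sigma)$ be a measurable space, $\Phi^t$ a flow on $\mathcal{X}$ (bijective measurable maps, $\Phi^{t_1}\circ\Phi^{t_2}=\Phi^{t_1+t_2}$, jointly measurable), $f_\sharp$ push-forward, and $\mu$ a probability measure with $\Phi^t_\sharp\mu=\mu$ for all $t$. Let $h^a$, $a>0$, be bijective measurable maps of $\mathcal{X}$ and $\mathcal{G}$ a group of bijective measurable maps with $h^{a_1}\circ h^{a_2}=h^{a_1a_2}$, $\Phi^t\circ g=g\circ\Phi^t$, $g\circ h^a=h^a\circ g$, $\Phi^t\circ h^a=h^a\circ\Phi^{t/a}$. Fix $g\in\mathcal{G}$ and $p\in\mathbb{R}$, and a measurable $F:\mathcal{X}\to\mathbb{R}$ with $F\circ h^a=F/a^p$ for all $a>0$. For integers $n\ge0$ let $k_n=2^n$ and define the generalized structure function $S_p(k_n)=k_n^{-p}\int F\circ g^n\,d\mu$. *)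

theory Defs
  imports "HOL-Analysis.Analysis" "HOL-Probability.Probability"
begin

text \<open>Generalized structure function S_p(k_n) = k_n^(-p) * integral of F o g^n, with k_n = 2^n.\<close>
definition structure_fun ::
  "'a measure \<Rightarrow> ('a \<Rightarrow> real) \<Rightarrow> ('a \<Rightarrow> 'a) \<Rightarrow> real \<Rightarrow> nat \<Rightarrow> real" where
  "structure_fun \<mu> F g p n = (2 ^ n :: real) powr (- p) * integral\<^sup>L \<mu> (\<lambda>x. F ((g ^^ n) x))"

end

theory Submission
  imports Defs
begin

text \<open>Since \<open>g\<close> commutes with \<open>h\<^sup>a\<close>, the \<open>n\<close>-th iterate of the \<open>\<mu>\<close>-preserving map
  \<open>g \<circ> h\<^sup>a\<close> is \<open>g\<^sup>n \<circ> (h\<^sup>a)\<^sup>n\<close>, and homogeneity of \<open>F\<close> gives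
  \<open>F \<circ> (g \<circ> h\<^sup>a)\<^sup>n = a\<^sup>-\<^sup>n\<^sup>p F \<circ> g\<^sup>n\<close>.  Integrating against the invariant measure yields
  \<open>\<integral> F \<circ> g\<^sup>n d\<mu> = a\<^sup>n\<^sup>p \<integral> F d\<mu>\<close>, and writing \<open>a\<^sup>n = k\<^sub>n powr log\<^sub>2 a\<close> turns the factor
  \<open>k\<^sub>n\<^sup>-\<^sup>p a\<^sup>n\<^sup>p\<close> of \<open>S\<^sub>p(k\<^sub>n)\<close> into \<open>k\<^sub>n powr (-\<zeta>\<^sub>p)\<close>.\<close>

lemma distr_funpow_eq:
  assumes T_meas: "T \<in> M \<rightarrow>\<^sub>M M" and T_inv: "distr M M T = M"
  shows "distr M M (T ^^ n) = M"
proof (induction n)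
  case 0
  then show ?case by (simp add: distr_id2)
next
  case (Suc n)
  have "distr M M (T ^^ Suc n) = distr (distr M M T) M (T ^^ n)"
    using distr_distr[OF measurable_compose_n[OF T_meas] T_meas]
    by (simp add: funpow_Suc_right del: funpow.simps)
  also have "\<dots> = M"
    using T_inv Suc.IH by simp
  finally show ?case .
qed

lemma integral_funpow_invariant:
  fixes f :: "'a \<Rightarrow> 'b::{banach, second_countable_topology}"
  assumes T_meas: "T \<in> M \<rightarrow>\<^sub>M M" and T_inv: "distr M M T = M"
    and f_meas: "f \<in> borel_measurable M"
  shows "integral\<^sup>L M (\<lambda>x. f ((T ^^ n) x)) = integral\<^sup>L M f"
  using integral_distr[OF measurable_compose_n[OF T_meas] f_meas]
  by (simp add: distr_funpow_eq[OF T_meas T_inv])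

lemma funpow_closed:
  assumes "\<And>x. x \<in> S \<Longrightarrow> g x \<in> S" and "x \<in> S"
  shows "(g ^^ n) x \<in> S"
  using assms by (induction n) auto

lemma funpow_commute_on:
  assumes g_into: "\<And>x. x \<in> S \<Longrightarrow> g x \<in> S"
    and commute: "\<And>x. x \<in> S \<Longrightarrow> g (h x) = h (g x)"
    and x: "x \<in> S"
  shows "(g ^^ n) (h x) = h ((g ^^ n) x)"
  by (induction n) (simp_all add: commute funpow_closed[OF g_into x])

lemma homogeneous_funpow_comp:
  fixes F :: "'a \<Rightarrow> 'b::monoid_mult"
  assumes g_into: "\<And>x. x \<in> S \<Longrightarrow> g x \<in> S"
    and h_into: "\<And>x. x \<in> S \<Longrightarrow> h x \<in> S"
    and commute: "\<And>x. x \<in> S \<Longrightarrow> g (h x) = h (g x)"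
    and homogeneous: "\<And>x. x \<in> S \<Longrightarrow> F (h x) = r * F x"
    and x: "x \<in> S"
  shows "F (((g \<circ> h) ^^ n) x) = r ^ n * F ((g ^^ n) x)"
  using x
proof (induction n arbitrary: x)
  case 0
  then show ?case by simp
next
  case (Suc n)
  have "F (((g \<circ> h) ^^ Suc n) x) = F (((g \<circ> h) ^^ n) (g (h x)))"
    by (simp add: funpow_Suc_right del: funpow.simps)
  also have "\<dots> = r ^ n * F ((g ^^ n) (g (h x)))"
    using Suc.IH Suc.prems g_into h_into by blast
  also have "(g ^^ n) (g (h x)) = h ((g ^^ Suc n) x)"
    using funpow_commute_on[of S g h, OF g_into commute Suc.prems, of "Suc n"]
    by (simp add: funpow_Suc_right del: funpow.simps)
  also have "F (h ((g ^^ Suc n) x)) = r * F ((g ^^ Suc n) x)"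
    using homogeneous funpow_closed[of S g] g_into Suc.prems by blast
  finally show ?case
    by (simp only: power_Suc2 mult.assoc)
qed

text \<open>No integrability hypothesis is needed: change of variables and pulling out a constant
  factor hold for the Bochner integral unconditionally, non-integrable functions having integral
  \<open>0\<close>.\<close>

lemma integral_funpow_homogeneous:
  fixes f :: "'a \<Rightarrow> real"
  assumes g_meas: "g \<in> M \<rightarrow>\<^sub>M M" and h_meas: "h \<in> M \<rightarrow>\<^sub>M M"
    and commute: "\<And>x. x \<in> space M \<Longrightarrow> g (h x) = h (g x)"
    and gh_inv: "distr M M (g \<circ> h) = M"
    and f_meas: "f \<in> borel_measurable M"
    and homogeneous: "\<And>x. x \<in> space M \<Longrightarrow> f (h x) = r * f x"
  shows "integral\<^sup>L M f = r ^ n * integral\<^sup>L M (\<lambda>x. f ((g ^^ n) x))"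
proof -
  have gh_meas: "g \<circ> h \<in> M \<rightarrow>\<^sub>M M"
    using g_meas h_meas by (rule measurable_comp[rotated])
  have "integral\<^sup>L M f = integral\<^sup>L M (\<lambda>x. f (((g \<circ> h) ^^ n) x))"
    using integral_funpow_invariant[OF gh_meas gh_inv f_meas] by simp
  also have "\<dots> = integral\<^sup>L M (\<lambda>x. r ^ n * f ((g ^^ n) x))"
    using homogeneous_funpow_comp[of "space M" g h f r] g_meas h_meas commute homogeneous
    by (intro Bochner_Integration.integral_cong) (auto simp: measurable_space)
  finally show ?thesis
    by (simp add: integral_mult_right_zero)
qed

lemma powr_real_mult_eq_power_powr_log:
  fixes a b q :: real
  assumes "0 < a" "0 < b" "b \<noteq> 1"
  shows "a powr (real n * q) = (b ^ n) powr (log b a * q)"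
proof -
  have "(b ^ n) powr (log b a * q) = (b powr real n) powr (log b a * q)"
    using assms by (simp add: powr_realpow)
  also have "\<dots> = (b powr log b a) powr (real n * q)"
    by (simp add: powr_powr algebra_simps)
  also have "\<dots> = a powr (real n * q)"
    using assms by simp
  finally show ?thesis ..
qed

theorem proposition5:
  fixes \<mu> :: "'a measure"
    and \<Phi> :: "real \<Rightarrow> 'a \<Rightarrow> 'a"
    and h :: "real \<Rightarrow> 'a \<Rightarrow> 'a"
    and \<G> :: "('a \<Rightarrow> 'a) set"
    and g :: "'a \<Rightarrow> 'a"
    and F :: "'a \<Rightarrow> real"
    and p a :: real
  assumes prob: "prob_space \<mu>"
    and flow_bij: "\<And>t. bij_betw (\<Phi> t) (space \<mu>) (space \<mu>)"
    and flow_meas: "\<And>t. \<Phi> t \<in> \<mu> \<rightarrow>\<^sub>M \<mu>"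
    and flow_comp: "\<And>t1 t2 x. x \<in> space \<mu> \<Longrightarrow> \<Phi> t1 (\<Phi> t2 x) = \<Phi> (t1 + t2) x"
    and flow_joint: "(\<lambda>(t, x). \<Phi> t x) \<in> (borel \<Otimes>\<^sub>M \<mu>) \<rightarrow>\<^sub>M \<mu>"
    and flow_inv: "\<And>t. distr \<mu> \<mu> (\<Phi> t) = \<mu>"
    and h_bij: "\<And>b. b > 0 \<Longrightarrow> bij_betw (h b) (space \<mu>) (space \<mu>)"
    and h_meas: "\<And>b. b > 0 \<Longrightarrow> h b \<in> \<mu> \<rightarrow>\<^sub>M \<mu>"
    and h_comp: "\<And>b1 b2 x. b1 > 0 \<Longrightarrow> b2 > 0 \<Longrightarrow> x \<in> space \<mu> \<Longrightarrow>
                   h b1 (h b2 x) = h (b1 * b2) x"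
    and G_bij: "\<And>f. f \<in> \<G> \<Longrightarrow> bij_betw f (space \<mu>) (space \<mu>)"
    and G_meas: "\<And>f. f \<in> \<G> \<Longrightarrow> f \<in> \<mu> \<rightarrow>\<^sub>M \<mu>"
    and G_id: "id \<in> \<G>"
    and G_comp: "\<And>f1 f2. f1 \<in> \<G> \<Longrightarrow> f2 \<in> \<G> \<Longrightarrow> f1 \<circ> f2 \<in> \<G>"
    and G_inv: "\<And>f. f \<in> \<G> \<Longrightarrow> \<exists>f'\<in>\<G>. \<forall>x\<in>space \<mu>. f' (f x) = x \<and> f (f' x) = x"
    and G_flow: "\<And>f t x. f \<in> \<G> \<Longrightarrow> x \<in> space \<mu> \<Longrightarrow> \<Phi> t (f x) = f (\<Phi> t x)"
    and G_h: "\<And>f b x. f \<in> \<G> \<Longrightarrow> b > 0 \<Longrightarrow> x \<in> space \<mu> \<Longrightarrow> f (h b x) = h b (f x)"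
    and flow_h: "\<And>t b x. b > 0 \<Longrightarrow> x \<in> space \<mu> \<Longrightarrow> \<Phi> t (h b x) = h b (\<Phi> (t / b) x)"
    and g_in: "g \<in> \<G>"
    and F_meas: "F \<in> borel_measurable \<mu>"
    and F_scal: "\<And>b x. b > 0 \<Longrightarrow> x \<in> space \<mu> \<Longrightarrow> F (h b x) = F x / b powr p"
    and a_pos: "a > 0"
    and inv_gh: "distr \<mu> \<mu> (g \<circ> h a) = \<mu>"
    and F_int: "integrable \<mu> F"
    and F_nz: "integral\<^sup>L \<mu> F \<noteq> 0"
  shows "\<exists>c. c \<noteq> 0 \<and>
           (\<forall>n. structure_fun \<mu> F g p n = c * (2 ^ n :: real) powr (- ((1 - log 2 a) * p)))"
proof (intro exI conjI allI)
  have g_meas: "g \<in> \<mu> \<rightarrow>\<^sub>M \<mu>"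
    using G_meas[OF g_in] .
  have scaling: "F (h a x) = a powr (- p) * F x" if "x \<in> space \<mu>" for x
    using F_scal[OF a_pos that] by (simp add: powr_minus_divide)
  fix n
  have "integral\<^sup>L \<mu> F = (a powr (- p)) ^ n * integral\<^sup>L \<mu> (\<lambda>x. F ((g ^^ n) x))"
    using integral_funpow_homogeneous[OF g_meas h_meas[OF a_pos] G_h[OF g_in a_pos]
        inv_gh F_meas scaling] by simp
  then have "integral\<^sup>L \<mu> (\<lambda>x. F ((g ^^ n) x)) = integral\<^sup>L \<mu> F * a powr (real n * p)"
    using a_pos by (simp add: powr_realpow[symmetric] powr_powr powr_minus field_simps)
  also have "a powr (real n * p) = (2 ^ n) powr (log 2 a * p)"
    using a_pos by (rule powr_real_mult_eq_power_powr_log) simp_all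
  finally show "structure_fun \<mu> F g p n
      = integral\<^sup>L \<mu> F * (2 ^ n :: real) powr (- ((1 - log 2 a) * p))"
    by (simp add: structure_fun_def powr_add[symmetric] algebra_simps)
  show "integral\<^sup>L \<mu> F \<noteq> 0"
    using F_nz .
qed

end
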